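(* Let $\rho$ be a congruence on $\mathcal{OR}_n$ and let $\sigma\in\mathcal{OR}_n$ with $\mathrm{rk}(\sigma)=k$. Suppose there exists $\tau\in\mathcal{OR}_n$ with $\tau\neq\sigma$ and $\tau\,\rho\,\sigma$. Then: if $k=n$, $\rho(0)\supseteq\mathcal I_m^{\rm I}$ or $\rho(0)\supseteq\mathcal I_m^{\rm II}$; if $0\le k\le m$, $\rho(0)\supseteq\mathcal I_{k-1}$, where $\mathcal I_{-1}=\emptyset$.
   Context: Let $m\ge 1$, $n=2m$, $\mathbf n=\{1,\dots,n\}$, $\theta(i)=n+1-i$, written $\bar i$. A proper subset $I\subset\mathbf n$ is admissible if $I\cap\theta(I)=\emptyset$; $\mathbf n$ and $\emptyset$ are also admissible. For an injective partial map $\sigma$ of $\mathbf n$, $I(\sigma)$ is its domain, $J(\sigma)$ its image, $\mathrm{rk}(\sigma)=|I(\sigma)|$; products are compositions of partial maps. $W=\{\sigma\in S_n:\sigma(\bar i)=\overline{\sigma(i)}\ \forall i\}$, $W'=\{\sigma\in W:|\sigma(\{1,\dots,m\})\cap\{m+1,\dots,n\}|\text{ even}\}$. An admissible $m$-subset is of type I if it contains an even number of elements $>m$, type II otherwise. $\mathcal{OR}_n$ consists of the injective partial maps $\sigma$ with: $\mathrm{rk}(\sigma)<m$ and $I(\sigma),J(\sigma)$ admissible; or $\mathrm{rk}(\sigma)=m$ and $I(\sigma),J(\sigma)$ admissible of the same type; or $\sigma\in W'$. For $\mathrm{rk}(\sigma)=m$, $\mathrm{tp}(\sigma)$ is the type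 of $I(\sigma)$. $\mathcal I_k=\{\sigma:\mathrm{rk}(\sigma)\le k\}$ for $k\in\{0,\dots,m-1,n\}$; $\mathcal I_m^{\rm I}=\{\sigma:\mathrm{rk}(\sigma)<m$, or $\mathrm{rk}(\sigma)=m$ and $\mathrm{tp}(\sigma)={\rm I}\}$, $\mathcal I_m^{\rm II}$ likewise with type II. $0$ is the empty map and $\rho(0)$ its $\rho$-class. *)

theory Defs
  imports Main
begin

text \<open>Partial maps of n = {1..2m} are represented as nat \<Rightarrow> nat option.
  Throughout, m is the parameter and n = 2*m.\<close>

definition theta :: "nat \<Rightarrow> nat \<Rightarrow> nat" where
  "theta m i = 2*m + 1 - i"

definition pinj :: "nat \<Rightarrow> (nat \<Rightarrow> nat option) \<Rightarrow> bool" where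
  "pinj m \<sigma> \<longleftrightarrow> dom \<sigma> \<subseteq> {1..2*m} \<and> ran \<sigma> \<subseteq> {1..2*m} \<and> inj_on \<sigma> (dom \<sigma>)"

definition rk :: "(nat \<Rightarrow> nat option) \<Rightarrow> nat" where
  "rk \<sigma> = card (dom \<sigma>)"

definition admissible :: "nat \<Rightarrow> nat set \<Rightarrow> bool" where
  "admissible m I \<longleftrightarrow> I = {1..2*m} \<or> I = {} \<or>
     (I \<subset> {1..2*m} \<and> I \<inter> theta m ` I = {})"

definition typeI :: "nat \<Rightarrow> nat set \<Rightarrow> bool" where
  "typeI m S \<longleftrightarrow> even (card {x\<in>S. x > m})"

definition Wgrp :: "nat \<Rightarrow> (nat \<Rightarrow> nat option) set" where
  "Wgrp m = {\<sigma>. pinj m \<sigma> \<and> dom \<sigma> = {1..2*m} \<and> ran \<sigma> = {1..2*m} \<and>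
      (\<forall>i\<in>{1..2*m}. \<sigma> (theta m i) = map_option (theta m) (\<sigma> i))}"

definition Wprime :: "nat \<Rightarrow> (nat \<Rightarrow> nat option) set" where
  "Wprime m = {\<sigma>\<in>Wgrp m. even (card ({y. \<exists>x\<in>{1..m}. \<sigma> x = Some y} \<inter> {m+1..2*m}))}"

definition OR :: "nat \<Rightarrow> (nat \<Rightarrow> nat option) set" where
  "OR m = {\<sigma>. pinj m \<sigma> \<and>
     ((rk \<sigma> < m \<and> admissible m (dom \<sigma>) \<and> admissible m (ran \<sigma>))
      \<or> (rk \<sigma> = m \<and> admissible m (dom \<sigma>) \<and> admissible m (ran \<sigma>)
          \<and> (typeI m (dom \<sigma>) \<longleftrightarrow> typeI m (ran \<sigma>)))
      \<or> \<sigma> \<in> Wprime m)}"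

definition pmul :: "(nat \<Rightarrow> nat option) \<Rightarrow> (nat \<Rightarrow> nat option) \<Rightarrow> (nat \<Rightarrow> nat option)" where
  "pmul \<sigma> \<tau> = \<tau> \<circ>\<^sub>m \<sigma>"

definition congruence_OR :: "nat \<Rightarrow> ((nat \<Rightarrow> nat option) \<times> (nat \<Rightarrow> nat option)) set \<Rightarrow> bool" where
  "congruence_OR m \<rho> \<longleftrightarrow> equiv (OR m) \<rho> \<and>
     (\<forall>a b c. (a, b) \<in> \<rho> \<and> c \<in> OR m \<longrightarrow> (pmul c a, pmul c b) \<in> \<rho> \<and> (pmul a c, pmul b c) \<in> \<rho>)"

definition Ik :: "nat \<Rightarrow> nat \<Rightarrow> (nat \<Rightarrow> nat option) set" where
  "Ik m k = {\<sigma>\<in>OR m. rk \<sigma> \<le> k}"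

definition Im_I :: "nat \<Rightarrow> (nat \<Rightarrow> nat option) set" where
  "Im_I m = {\<sigma>\<in>OR m. rk \<sigma> < m \<or> (rk \<sigma> = m \<and> typeI m (dom \<sigma>))}"

definition Im_II :: "nat \<Rightarrow> (nat \<Rightarrow> nat option) set" where
  "Im_II m = {\<sigma>\<in>OR m. rk \<sigma> < m \<or> (rk \<sigma> = m \<and> \<not> typeI m (dom \<sigma>))}"

end

(* Two distinct related elements sigma rho tau force a partial identity 1_B, with B theta-free
   (B and theta(B) disjoint), into the class of 0. Restricting sigma rho tau to a suitable B and
   composing with the partial inverse of sigma restricted to B gives 1_B rho g for a partial
   permutation g of B that is not the identity; restricting once more yields 1_A rho 1_B for
   some A strictly inside B, and conjugating by transpositions of B then collapses 1_B to 0.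
   For rank k <= m one finds such a B with |B| >= k - 1; for sigma in W' one can separate the
   point where sigma and tau differ from the preimage of its tau-image and get |B| = m. Finally
   every pi of rank at most |B| (of the type of B when the rank is m) is conjugate to a partial
   identity on a subset of B by a partial bijection in OR, so pi rho 0. *)

theory Submission
  imports Defs "HOL-Combinatorics.Transposition"
begin

lemma theta_theta [simp]: "i \<in> {1..2*m} \<Longrightarrow> theta m (theta m i) = i"
  by (auto simp: theta_def)

lemma theta_mem: "i \<in> {1..2*m} \<Longrightarrow> theta m i \<in> {1..2*m}"
  by (auto simp: theta_def)

lemma theta_neq_self: "theta m i \<noteq> i"
  unfolding theta_def by presburger

lemma inj_on_theta: "inj_on (theta m) {1..2*m}"
  by (metis inj_on_inverseI theta_theta)

definition theta_free :: "nat \<Rightarrow> nat set \<Rightarrow> bool" where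
  "theta_free m B \<longleftrightarrow> B \<subseteq> {1..2*m} \<and> (\<forall>x\<in>B. theta m x \<notin> B)"

lemma theta_free_subset: "theta_free m C \<Longrightarrow> B \<subseteq> C \<Longrightarrow> theta_free m B"
  by (auto simp: theta_free_def)

lemma theta_free_finite: "theta_free m B \<Longrightarrow> finite B"
  by (auto simp: theta_free_def intro: finite_subset)

lemma card_theta_free:
  assumes "theta_free m B" shows "card (B \<union> theta m ` B) = 2 * card B"
proof -
  have B: "B \<subseteq> {1..2*m}" "finite B" using assms theta_free_finite by (auto simp: theta_free_def)
  have "B \<inter> theta m ` B = {}" using assms by (auto simp: theta_free_def)
  moreover have "card (theta m ` B) = card B"
    using card_image inj_on_subset[OF inj_on_theta B(1)] by blast
  ultimately show ?thesis using B(2) by (simp add: card_Un_disjoint)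
qed

lemma card_theta_free_le:
  assumes "theta_free m B" shows "card B \<le> m"
proof -
  have "B \<union> theta m ` B \<subseteq> {1..2*m}" using assms theta_mem by (auto simp: theta_free_def)
  then have "card (B \<union> theta m ` B) \<le> 2 * m" using card_mono[of "{1..2*m}"] by fastforce
  then show ?thesis using card_theta_free[OF assms] by simp
qed

lemma theta_free_admissible: "theta_free m B \<Longrightarrow> admissible m B"
  by (auto simp: theta_free_def admissible_def)

lemma admissible_theta_free:
  assumes "1 \<le> m" "admissible m B" "card B \<le> m" shows "theta_free m B"
  using assms by (auto simp: admissible_def theta_free_def)

lemma theta_free_exchange:
  assumes "theta_free m A" "w \<in> {1..2*m}" shows "theta_free m (insert w (A - {theta m w}))"
  unfolding theta_free_def
proof (intro conjI ballI)
  show "insert w (A - {theta m w}) \<subseteq> {1..2*m}" using assms by (auto simp: theta_free_def)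
  fix x assume x: "x \<in> insert w (A - {theta m w})"
  then have "x \<in> {1..2*m}" using assms by (auto simp: theta_free_def)
  then show "theta m x \<notin> insert w (A - {theta m w})"
    using x assms(1) theta_neq_self[of m w] theta_theta[of x m] by (auto simp: theta_free_def)
qed

lemma theta_free_extend:
  assumes "theta_free m T" obtains B where "T \<subseteq> B" "theta_free m B" "card B = m"
proof
  define B where "B = T \<union> {i\<in>{1..m}. theta m i \<notin> T}"
  have T: "T \<subseteq> {1..2*m}" "\<And>x. x \<in> T \<Longrightarrow> theta m x \<notin> T"
    using assms by (auto simp: theta_free_def)
  show "T \<subseteq> B" by (simp add: B_def)
  have "theta m x \<notin> B" if x: "x \<in> B" for x
  proof (cases "x \<in> T")
    case True
    then show ?thesis using T theta_theta[of x m] by (auto simp: B_def)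
  next
    case False
    then have "x \<in> {1..m}" "theta m x \<notin> T" using x by (auto simp: B_def)
    then show ?thesis by (auto simp: B_def theta_def)
  qed
  moreover have "B \<subseteq> {1..2*m}" using T by (auto simp: B_def)
  ultimately show free: "theta_free m B" by (simp add: theta_free_def)
  have "{1..2*m} \<subseteq> B \<union> theta m ` B"
  proof
    fix i assume i: "i \<in> {1..2*m}"
    show "i \<in> B \<union> theta m ` B"
    proof (cases "i \<in> B")
      case False
      then have "theta m i \<in> B" using i by (auto simp: B_def theta_def)
      then show ?thesis using theta_theta[OF i] by (metis UnI2 image_eqI)
    qed simp
  qed
  moreover have "B \<union> theta m ` B \<subseteq> {1..2*m}" using free theta_mem by (auto simp: theta_free_def)
  ultimately have "B \<union> theta m ` B = {1..2*m}" by (rule equalityI[rotated])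
  then show "card B = m" using card_theta_free[OF free] by simp
qed

lemma theta_free_separate:
  assumes "x \<in> {1..2*m}" "y \<in> {1..2*m}" "x \<noteq> y"
  obtains B where "theta_free m B" "card B = m" "x \<in> B" "y \<notin> B"
proof -
  have "theta_free m {x, theta m y}"
    using assms by (auto simp: theta_free_def theta_def) presburger+
  then obtain B where B: "{x, theta m y} \<subseteq> B" "theta_free m B" "card B = m"
    using theta_free_extend by blast
  then have "y \<notin> B" using assms(2) theta_theta[of y m] by (auto simp: theta_free_def)
  then show ?thesis using that B by blast
qed

definition map_inv :: "('a \<rightharpoonup> 'b) \<Rightarrow> ('b \<rightharpoonup> 'a)" where
  "map_inv f y = (if y \<in> ran f then Some (THE x. f x = Some y) else None)"

lemma map_inv_apply:
  assumes "inj_on f (dom f)" "f x = Some y" shows "map_inv f y = Some x"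
proof -
  have "(THE x. f x = Some y) = x"
    using assms by (intro the_equality) (auto simp: inj_on_def domI)
  then show ?thesis using assms(2) by (auto simp: map_inv_def ran_def)
qed

lemma map_inv_eq_Some_iff:
  assumes "inj_on f (dom f)" shows "map_inv f y = Some x \<longleftrightarrow> f x = Some y"
proof
  assume inv: "map_inv f y = Some x"
  then obtain x' where "f x' = Some y" by (auto simp: map_inv_def ran_def split: if_splits)
  then show "f x = Some y" using inv map_inv_apply[OF assms] by simp
qed (fact map_inv_apply[OF assms])

lemma dom_map_inv: "dom (map_inv f) = ran f"
  by (auto simp: map_inv_def dom_def)

lemma ran_map_inv: "inj_on f (dom f) \<Longrightarrow> ran (map_inv f) = dom f"
  by (auto simp: ran_def map_inv_eq_Some_iff)

lemma inj_on_map_inv: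
  assumes "inj_on f (dom f)" shows "inj_on (map_inv f) (dom (map_inv f))"
  using assms by (intro inj_onI) (auto simp: map_inv_eq_Some_iff)

lemma map_inv_comp_self: "inj_on f (dom f) \<Longrightarrow> map_inv f \<circ>\<^sub>m f = Some |` dom f"
  by (rule ext) (auto simp: map_comp_def restrict_map_def map_inv_apply split: option.splits)

lemma card_ran_eq_card_dom:
  assumes "inj_on f (dom f)" shows "card (ran f) = card (dom f)"
proof -
  have "ran f = (the \<circ> f) ` dom f" by (force simp: ran_def dom_def)
  moreover have "inj_on (the \<circ> f) (dom f)"
    using assms by (auto simp: inj_on_def dom_def)
  ultimately show ?thesis using card_image by metis
qed

lemma restrict_map_dom_self [simp]: "f |` dom f = f"
  by (rule ext) (simp add: restrict_map_def domIff)

lemma pmul_restrict_left: "pmul (Some |` B) f = f |` B"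
  by (rule ext) (simp add: pmul_def restrict_map_def)

lemma pmul_restrict_right: "ran f \<subseteq> R \<Longrightarrow> pmul f (Some |` R) = f"
  by (rule ext) (auto simp: pmul_def map_comp_def restrict_map_def split: option.splits dest: ranI)

lemma pmul_empty [simp]: "pmul Map.empty f = Map.empty" "pmul f Map.empty = Map.empty"
  by (auto simp: pmul_def map_comp_def split: option.splits)

lemma pmul_assoc: "pmul (pmul f g) h = pmul f (pmul g h)"
  by (rule ext) (simp add: pmul_def map_comp_def split: option.splits)

lemma OR_theta_freeI:
  assumes "pinj m f" "theta_free m (dom f)" "theta_free m (ran f)"
    and "rk f = m \<Longrightarrow> (typeI m (dom f) \<longleftrightarrow> typeI m (ran f))"
  shows "f \<in> OR m"
proof -
  have "rk f \<le> m" using card_theta_free_le[OF assms(2)] by (simp add: rk_def)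
  then show ?thesis using assms theta_free_admissible by (auto simp: OR_def)
qed

lemma OR_low_rankD:
  assumes "1 \<le> m" "f \<in> OR m" "rk f \<le> m"
  shows "pinj m f" "theta_free m (dom f)" "theta_free m (ran f)"
    and "rk f = m \<Longrightarrow> (typeI m (dom f) \<longleftrightarrow> typeI m (ran f))"
proof -
  have "f \<notin> Wprime m" using assms by (auto simp: Wprime_def Wgrp_def rk_def)
  then have f: "pinj m f" "admissible m (dom f)" "admissible m (ran f)"
    and type: "rk f = m \<Longrightarrow> (typeI m (dom f) \<longleftrightarrow> typeI m (ran f))"
    using assms(2) by (auto simp: OR_def)
  have "card (ran f) = rk f" using f(1) card_ran_eq_card_dom by (auto simp: pinj_def rk_def)
  then show "pinj m f" "theta_free m (dom f)" "theta_free m (ran f)"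
    using f assms(1,3) admissible_theta_free by (auto simp: rk_def)
  show "rk f = m \<Longrightarrow> (typeI m (dom f) \<longleftrightarrow> typeI m (ran f))" by (fact type)
qed

lemma restrict_bij_in_OR:
  assumes "bij_betw f B B'" "theta_free m B" "theta_free m B'"
    and "card B = m \<Longrightarrow> (typeI m B \<longleftrightarrow> typeI m B')"
  shows "(Some \<circ> f) |` B \<in> OR m"
proof (rule OR_theta_freeI)
  have dom: "dom ((Some \<circ> f) |` B) = B" by auto
  have ran: "ran ((Some \<circ> f) |` B) = B'"
    using assms(1) by (auto simp: ran_def restrict_map_def bij_betw_def)
  have "inj_on ((Some \<circ> f) |` B) B"
    using assms(1) by (auto simp: inj_on_def bij_betw_def restrict_map_def)
  then show "pinj m ((Some \<circ> f) |` B)"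
    using dom ran assms(2,3) by (simp add: pinj_def theta_free_def)
  show "theta_free m (dom ((Some \<circ> f) |` B))" "theta_free m (ran ((Some \<circ> f) |` B))"
    using dom ran assms(2,3) by simp_all
  show "rk ((Some \<circ> f) |` B) = m \<Longrightarrow>
      typeI m (dom ((Some \<circ> f) |` B)) = typeI m (ran ((Some \<circ> f) |` B))"
    using dom ran assms(4) by (simp add: rk_def)
qed

lemma pid_in_OR: "theta_free m B \<Longrightarrow> Some |` B \<in> OR m"
  using restrict_bij_in_OR[of id B B m] by simp

lemma map_inv_in_OR:
  assumes "1 \<le> m" "f \<in> OR m" "rk f \<le> m" shows "map_inv f \<in> OR m"
proof (rule OR_theta_freeI)
  note f = OR_low_rankD[OF assms]
  have inj: "inj_on f (dom f)" using f(1) by (simp add: pinj_def)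
  then show "pinj m (map_inv f)"
    using f(1) inj_on_map_inv[OF inj] by (simp add: pinj_def dom_map_inv ran_map_inv)
  show "theta_free m (dom (map_inv f))" "theta_free m (ran (map_inv f))"
    using f(2,3) inj by (simp_all add: dom_map_inv ran_map_inv)
  show "rk (map_inv f) = m \<Longrightarrow> typeI m (dom (map_inv f)) = typeI m (ran (map_inv f))"
    using f(4) inj by (simp add: rk_def dom_map_inv ran_map_inv card_ran_eq_card_dom)
qed

lemma restrict_conjugate_eq_Some_iff:
  assumes "inj_on \<sigma> (dom \<sigma>)"
  shows "(map_inv (\<sigma> |` B) \<circ>\<^sub>m \<tau> |` B) z = Some y \<longleftrightarrow>
    z \<in> B \<and> y \<in> B \<and> y \<in> dom \<sigma> \<and> \<tau> z = \<sigma> y"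
proof -
  have "inj_on (\<sigma> |` B) (dom (\<sigma> |` B))"
    using assms by (auto simp: inj_on_def restrict_map_def) (metis domI)
  then show ?thesis
    by (auto simp: map_comp_Some_iff map_inv_eq_Some_iff restrict_map_def)
qed

locale OR_congruence =
  fixes m :: nat and \<rho> :: "((nat \<Rightarrow> nat option) \<times> (nat \<Rightarrow> nat option)) set"
  assumes m_pos: "1 \<le> m" and congruence: "congruence_OR m \<rho>"
begin

abbreviation collapsed :: "nat set \<Rightarrow> bool" where
  "collapsed B \<equiv> (Some |` B, Map.empty) \<in> \<rho>"

lemma mult_left: "(a, b) \<in> \<rho> \<Longrightarrow> c \<in> OR m \<Longrightarrow> (pmul c a, pmul c b) \<in> \<rho>"
  using congruence by (simp add: congruence_OR_def)

lemma mult_right: "(a, b) \<in> \<rho> \<Longrightarrow> c \<in> OR m \<Longrightarrow> (pmul a c, pmul b c) \<in> \<rho>"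
  using congruence by (simp add: congruence_OR_def)

lemma related_in_OR: "(a, b) \<in> \<rho> \<Longrightarrow> a \<in> OR m" "(a, b) \<in> \<rho> \<Longrightarrow> b \<in> OR m"
  using congruence by (auto simp: congruence_OR_def equiv_def refl_on_def)

lemma rel_refl: "a \<in> OR m \<Longrightarrow> (a, a) \<in> \<rho>"
  using congruence by (auto simp: congruence_OR_def equiv_def refl_on_def)

lemma rel_sym: "(a, b) \<in> \<rho> \<Longrightarrow> (b, a) \<in> \<rho>"
  using congruence by (auto simp: congruence_OR_def equiv_def dest: symD)

lemma rel_trans: "(a, b) \<in> \<rho> \<Longrightarrow> (b, c) \<in> \<rho> \<Longrightarrow> (a, c) \<in> \<rho>"
  using congruence by (auto simp: congruence_OR_def equiv_def dest: transD)

lemma collapsed_subset: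
  assumes "collapsed C" "theta_free m F" "F \<subseteq> C" shows "collapsed F"
  using mult_left[OF assms(1) pid_in_OR[OF assms(2)]] assms(3)
  by (simp add: pmul_restrict_left Int_absorb1)

lemma collapsed_insert:
  assumes free: "theta_free m (insert w A)" and "w \<notin> A"
    and rel: "(Some |` A, Some |` insert w A) \<in> \<rho>"
  shows "collapsed (insert w A)"
proof -
  define C where "C = insert w A"
  have exchange: "(Some |` A, Some |` insert w (A - {x})) \<in> \<rho>" if x: "x \<in> A" for x
  proof -
    \<comment> \<open>conjugating by the transposition of x and w fixes 1_C and trades x for w in A\<close>
    define p where "p = (Some \<circ> transpose x w) |` C"
    have "p \<in> OR m"
      unfolding p_def using x free by (intro restrict_bij_in_OR) (auto simp: C_def)
    then have "(pmul p (pmul (Some |` A) p), pmul p (pmul (Some |` C) p)) \<in> \<rho>"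
      using mult_left mult_right rel by (simp add: C_def)
    moreover have "pmul p (pmul (Some |` A) p) = Some |` insert w (A - {x})"
      using x \<open>w \<notin> A\<close>
      by (intro ext) (auto simp: p_def C_def pmul_def restrict_map_def transpose_def)
    moreover have "pmul p (pmul (Some |` C) p) = Some |` C"
      using x by (intro ext) (auto simp: p_def C_def pmul_def restrict_map_def transpose_def)
    ultimately show ?thesis using rel rel_sym rel_trans by (metis C_def)
  qed
  have "collapsed F" if "finite F" "F \<subseteq> A" for F
    using that
  proof (induction F rule: finite_induct)
    case empty
    show ?case using rel_refl pid_in_OR[of m "{}"] by (simp add: theta_free_def)
  next
    case (insert x F)
    have "theta_free m (insert x F)" using free insert.prems theta_free_subset by blast
    then have "(pmul (Some |` insert x F) (Some |` A),
                pmul (Some |` insert x F) (Some |` insert w (A - {x}))) \<in> \<rho>"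
      using mult_left exchange insert.prems pid_in_OR by blast
    moreover have "insert x F \<inter> A = insert x F" "insert w (A - {x}) \<inter> insert x F = F"
      using insert \<open>w \<notin> A\<close> by auto
    ultimately have "(Some |` insert x F, Some |` F) \<in> \<rho>"
      by (simp add: pmul_restrict_left Int_commute)
    then show ?case using insert rel_trans by blast
  qed
  then have "collapsed A" using theta_free_finite[OF free] by simp
  then show ?thesis using rel rel_sym rel_trans by blast
qed

lemma collapsed_psubset:
  assumes free: "theta_free m C" and "A \<subset> C" and rel: "(Some |` A, Some |` C) \<in> \<rho>"
  shows "collapsed C"
proof -
  obtain x where x: "x \<in> C" "x \<notin> A" using \<open>A \<subset> C\<close> by auto
  have "theta_free m (C - {x})" using free theta_free_subset by blast
  then have "(pmul (Some |` (C - {x})) (Some |` A), pmul (Some |` (C - {x})) (Some |` C)) \<in> \<rho>"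
    using mult_left rel pid_in_OR by blast
  moreover have "A \<inter> (C - {x}) = A" "C \<inter> (C - {x}) = C - {x}" using \<open>A \<subset> C\<close> x by auto
  ultimately have "(Some |` A, Some |` (C - {x})) \<in> \<rho>" by (simp add: pmul_restrict_left)
  then have "(Some |` (C - {x}), Some |` C) \<in> \<rho>" using rel rel_sym rel_trans by blast
  moreover have "C = insert x (C - {x})" using x(1) by blast
  ultimately show ?thesis using collapsed_insert[of x "C - {x}"] free by simp
qed

lemma collapsed_of_proper_extension:
  assumes rel: "(f, g) \<in> \<rho>" and "f \<subseteq>\<^sub>m g" "dom f \<noteq> dom g" "rk g \<le> m"
  shows "collapsed (dom g)"
proof -
  note g = OR_low_rankD[OF m_pos related_in_OR(2)[OF rel] \<open>rk g \<le> m\<close>]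
  have inj: "inj_on g (dom g)" using g(1) by (simp add: pinj_def)
  have "map_inv g \<in> OR m" using map_inv_in_OR[OF m_pos related_in_OR(2)[OF rel] \<open>rk g \<le> m\<close>] .
  then have "(pmul f (map_inv g), pmul g (map_inv g)) \<in> \<rho>" using mult_right rel by blast
  moreover have "pmul f (map_inv g) = Some |` dom f"
  proof
    fix z show "pmul f (map_inv g) z = (Some |` dom f) z"
    proof (cases "f z")
      case (Some y)
      then have "g z = Some y" using \<open>f \<subseteq>\<^sub>m g\<close> by (metis domI map_le_def)
      then show ?thesis using Some map_inv_apply[OF inj] by (simp add: pmul_def domI)
    qed (simp add: pmul_def domIff)
  qed
  moreover have "pmul g (map_inv g) = Some |` dom g" by (simp add: pmul_def map_inv_comp_self[OF inj])
  moreover have "dom f \<subset> dom g" using assms(2,3) map_le_implies_dom_le by blast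
  ultimately show ?thesis using collapsed_psubset g(2) by simp
qed

lemma collapsed_of_rel_shrinking:
  assumes free: "theta_free m B" and rel: "(Some |` B, g) \<in> \<rho>" and "dom g \<subset> B"
  shows "collapsed B"
proof -
  have "theta_free m (dom g)" using free \<open>dom g \<subset> B\<close> theta_free_subset by blast
  then have "(pmul (Some |` dom g) (Some |` B), pmul (Some |` dom g) g) \<in> \<rho>"
    using mult_left rel pid_in_OR by blast
  moreover have "B \<inter> dom g = dom g" using \<open>dom g \<subset> B\<close> by auto
  ultimately have "(Some |` dom g, g) \<in> \<rho>" by (simp add: pmul_restrict_left)
  then have "(Some |` dom g, Some |` B) \<in> \<rho>" using rel rel_sym rel_trans by blast
  then show ?thesis using collapsed_psubset free \<open>dom g \<subset> B\<close> by blast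
qed

lemma collapsed_Diff_of_rel_moving:
  assumes free: "theta_free m B" and rel: "(Some |` B, g) \<in> \<rho>"
    and "ran g \<subseteq> B" "inj_on g (dom g)" "x \<in> B" "g x = Some y" "y \<noteq> x"
  shows "collapsed (B - {x})"
proof -
  define B' where "B' = B - {x}"
  define R where "R = ran (g |` B')"
  have free': "theta_free m B'" using theta_free_subset[OF free] by (simp add: B'_def)
  have "(pmul (Some |` B') (Some |` B), pmul (Some |` B') g) \<in> \<rho>"
    using mult_left[OF rel pid_in_OR[OF free']] .
  moreover have "B \<inter> B' = B'" by (auto simp: B'_def)
  ultimately have rel': "(Some |` B', g |` B') \<in> \<rho>" by (simp add: pmul_restrict_left)
  have "R \<subseteq> ran g" by (auto simp: R_def dest: ran_restrictD intro: ranI)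
  then have "theta_free m R" using \<open>ran g \<subseteq> B\<close> theta_free_subset[OF free] by simp
  then have "(pmul (Some |` B') (Some |` R), pmul (g |` B') (Some |` R)) \<in> \<rho>"
    using mult_right[OF rel' pid_in_OR] by simp
  moreover have "pmul (g |` B') (Some |` R) = g |` B'"
    using pmul_restrict_right[of "g |` B'" R] by (simp add: R_def)
  ultimately have "(Some |` (R \<inter> B'), g |` B') \<in> \<rho>" by (simp add: pmul_restrict_left)
  then have "(Some |` (R \<inter> B'), Some |` B') \<in> \<rho>" using rel_trans rel_sym[OF rel'] by blast
  moreover have "y \<in> B'" using assms(3,6,7) by (auto simp: B'_def ranI)
  moreover have "y \<notin> R"
  proof
    assume "y \<in> R"
    then obtain z where "z \<in> B'" "g z = Some y" by (auto simp: R_def dest: ran_restrictD)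
    then show False using assms(4,6) by (metis B'_def DiffD2 domI inj_onD singletonI)
  qed
  ultimately have "R \<inter> B' \<subset> B'" "(Some |` (R \<inter> B'), Some |` B') \<in> \<rho>" by blast+
  then have "collapsed B'" by (rule collapsed_psubset[OF free'])
  then show ?thesis by (simp add: B'_def)
qed

lemma rel_restrict_conjugate:
  assumes rel: "(\<sigma>, \<tau>) \<in> \<rho>" and free: "theta_free m B" and "B \<subseteq> dom \<sigma>"
  shows "(Some |` B, map_inv (\<sigma> |` B) \<circ>\<^sub>m \<tau> |` B) \<in> \<rho>"
proof -
  have rel': "(\<sigma> |` B, \<tau> |` B) \<in> \<rho>"
    using mult_left[OF rel pid_in_OR[OF free]] by (simp add: pmul_restrict_left)
  have dom: "dom (\<sigma> |` B) = B" using \<open>B \<subseteq> dom \<sigma>\<close> by auto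
  then have rk: "rk (\<sigma> |` B) \<le> m" using card_theta_free_le[OF free] by (simp add: rk_def)
  have inj: "inj_on (\<sigma> |` B) (dom (\<sigma> |` B))"
    using OR_low_rankD(1)[OF m_pos related_in_OR(1)[OF rel'] rk] by (simp add: pinj_def)
  have "(pmul (\<sigma> |` B) (map_inv (\<sigma> |` B)), pmul (\<tau> |` B) (map_inv (\<sigma> |` B))) \<in> \<rho>"
    using mult_right[OF rel' map_inv_in_OR[OF m_pos related_in_OR(1)[OF rel'] rk]] .
  then show ?thesis using map_inv_comp_self[OF inj] dom by (simp add: pmul_def)
qed

lemma collapsed_of_unmatched:
  assumes rel: "(\<sigma>, \<tau>) \<in> \<rho>" and free: "theta_free m B" and "B \<subseteq> dom \<sigma>"
    and "x \<in> B" "\<forall>z\<in>B. \<tau> x \<noteq> \<sigma> z"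
  shows "collapsed B"
proof -
  define g where "g = map_inv (\<sigma> |` B) \<circ>\<^sub>m \<tau> |` B"
  have "inj_on \<sigma> (dom \<sigma>)"
    using related_in_OR(1)[OF rel] by (simp add: OR_def pinj_def)
  then have "g z = Some y \<longleftrightarrow> z \<in> B \<and> y \<in> B \<and> y \<in> dom \<sigma> \<and> \<tau> z = \<sigma> y" for z y
    unfolding g_def by (rule restrict_conjugate_eq_Some_iff)
  then have "dom g \<subset> B" using assms(4,5) by blast
  then show ?thesis
    using collapsed_of_rel_shrinking[OF free rel_restrict_conjugate[OF rel free \<open>B \<subseteq> dom \<sigma>\<close>]]
    by (simp add: g_def)
qed

lemma collapsed_Diff_of_disagreement:
  assumes rel: "(\<sigma>, \<tau>) \<in> \<rho>" and free: "theta_free m B" and "B \<subseteq> dom \<sigma>"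
    and "x \<in> B" "\<tau> x \<noteq> \<sigma> x"
  shows "collapsed (B - {x})"
proof (cases "\<exists>z\<in>B. \<tau> x = \<sigma> z")
  case True
  then obtain z where z: "z \<in> B" "\<tau> x = \<sigma> z" by blast
  define g where "g = map_inv (\<sigma> |` B) \<circ>\<^sub>m \<tau> |` B"
  have "inj_on \<sigma> (dom \<sigma>)" "inj_on \<tau> (dom \<tau>)"
    using related_in_OR[OF rel] by (simp_all add: OR_def pinj_def)
  have g: "g z' = Some y \<longleftrightarrow> z' \<in> B \<and> y \<in> B \<and> y \<in> dom \<sigma> \<and> \<tau> z' = \<sigma> y" for z' y
    unfolding g_def by (rule restrict_conjugate_eq_Some_iff) fact
  have "ran g \<subseteq> B" using g by (auto simp: ran_def)
  moreover have "inj_on g (dom g)"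
  proof (rule inj_onI)
    fix z1 z2 assume "z1 \<in> dom g" "z2 \<in> dom g" "g z1 = g z2"
    then obtain y where "g z1 = Some y" "g z2 = Some y" by auto
    then have "\<tau> z1 = \<sigma> y" "\<tau> z2 = \<sigma> y" "y \<in> dom \<sigma>" using g by auto
    then show "z1 = z2" using \<open>inj_on \<tau> (dom \<tau>)\<close> by (metis domD domI inj_onD)
  qed
  moreover have "g x = Some z" using g z assms(3,4) by auto
  moreover have "z \<noteq> x" using z assms(5) by auto
  ultimately show ?thesis
    using collapsed_Diff_of_rel_moving[OF free rel_restrict_conjugate[OF rel free \<open>B \<subseteq> dom \<sigma>\<close>]]
      \<open>x \<in> B\<close> by (simp add: g_def)
next
  case False
  then have "collapsed B" using collapsed_of_unmatched[OF rel free] assms(3,4) by blast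
  moreover have "theta_free m (B - {x})" using theta_free_subset[OF free] by simp
  ultimately show ?thesis using collapsed_subset by blast
qed

lemma class_zero_of_collapsed_dom:
  assumes "collapsed (dom \<pi>)" "\<pi> \<in> OR m" shows "\<pi> \<in> \<rho> `` {Map.empty}"
  using rel_sym[OF mult_right[OF assms]] by (simp add: pmul_restrict_left)

lemma collapsed_dom_of_collapsed_ran:
  assumes "collapsed (ran f)" "f \<in> OR m" "rk f \<le> m" shows "collapsed (dom f)"
proof -
  have inj: "inj_on f (dom f)" using assms(2) by (simp add: OR_def pinj_def)
  have "(pmul f (pmul (Some |` ran f) (map_inv f)), Map.empty) \<in> \<rho>"
    using mult_left[OF mult_right[OF assms(1) map_inv_in_OR[OF m_pos assms(2,3)]] assms(2)] by simp
  moreover have "pmul f (pmul (Some |` ran f) (map_inv f)) = Some |` dom f"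
    by (simp add: pmul_assoc[symmetric] pmul_restrict_right)
      (simp add: pmul_def map_inv_comp_self[OF inj])
  ultimately show ?thesis by simp
qed

lemma class_zero_of_collapsed:
  assumes "collapsed C" "theta_free m C" "\<pi> \<in> OR m" "rk \<pi> \<le> card C"
    and "rk \<pi> = m \<Longrightarrow> (typeI m (dom \<pi>) \<longleftrightarrow> typeI m C)"
  shows "\<pi> \<in> \<rho> `` {Map.empty}"
proof -
  define P where "P = dom \<pi>"
  have "rk \<pi> \<le> m" using assms(4) card_theta_free_le[OF assms(2)] by simp
  note \<pi> = OR_low_rankD[OF m_pos assms(3) this]
  have fin: "finite C" "finite P" using assms(2) \<pi>(2) theta_free_finite by (auto simp: P_def)
  obtain F where F: "F \<subseteq> C" "card F = card P"
    using assms(4) obtain_subset_with_card_n by (metis P_def rk_def)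
  have F_eq: "F = C" if "card P = m"
    using F fin that card_theta_free_le[OF assms(2)] by (metis card_mono card_subset_eq le_antisym)
  obtain f where f: "bij_betw f P F" using finite_same_card_bij fin F finite_subset by metis
  define h where "h = (Some \<circ> f) |` P"
  have free_F: "theta_free m F" using theta_free_subset[OF assms(2) F(1)] .
  have "h \<in> OR m"
    unfolding h_def
  proof (rule restrict_bij_in_OR[OF f _ free_F])
    show "theta_free m P" using \<pi>(2) by (simp add: P_def)
    show "typeI m P \<longleftrightarrow> typeI m F" if "card P = m"
      using F_eq[OF that] assms(5) that by (simp add: P_def rk_def)
  qed
  moreover have "dom h = P" "ran h = F"
    using f by (auto simp: h_def ran_def restrict_map_def bij_betw_def split: if_splits)
  moreover have "collapsed F" using collapsed_subset[OF assms(1) free_F F(1)] .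
  ultimately have "collapsed P"
    using collapsed_dom_of_collapsed_ran \<open>rk \<pi> \<le> m\<close> F(2) by (metis P_def rk_def)
  then show ?thesis using class_zero_of_collapsed_dom assms(3) by (simp add: P_def)
qed

lemma exists_collapsed_of_low_rank:
  assumes rel: "(\<sigma>, \<tau>) \<in> \<rho>" and "\<sigma> \<noteq> \<tau>" "1 \<le> rk \<sigma>" "rk \<sigma> \<le> m"
  obtains C where "theta_free m C" "rk \<sigma> - 1 \<le> card C" "collapsed C"
proof (cases "\<exists>x\<in>dom \<sigma>. \<tau> x \<noteq> \<sigma> x")
  case True
  then obtain x where x: "x \<in> dom \<sigma>" "\<tau> x \<noteq> \<sigma> x" by blast
  have free: "theta_free m (dom \<sigma>)"
    using OR_low_rankD(2)[OF m_pos related_in_OR(1)[OF rel] assms(4)] .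
  then have "collapsed (dom \<sigma> - {x})" using collapsed_Diff_of_disagreement[OF rel] x by blast
  moreover have "card (dom \<sigma> - {x}) = rk \<sigma> - 1"
    using x theta_free_finite[OF free] by (simp add: rk_def)
  moreover have "theta_free m (dom \<sigma> - {x})" using theta_free_subset[OF free] by simp
  ultimately show ?thesis using that by simp
next
  case False
  then have "\<sigma> \<subseteq>\<^sub>m \<tau>" by (auto simp: map_le_def)
  obtain w where w: "\<tau> w \<noteq> \<sigma> w" using \<open>\<sigma> \<noteq> \<tau>\<close> by (metis ext)
  then have "w \<notin> dom \<sigma>" using False by auto
  then have "w \<in> dom \<tau>" using w by (simp add: domIff)
  then have "w \<in> {1..2*m}" using related_in_OR(2)[OF rel] by (auto simp: OR_def pinj_def)
  \<comment> \<open>removing theta w from dom sigma makes room for w, which sigma misses and tau hits\<close>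
  define C where "C = insert w (dom \<sigma> - {theta m w})"
  have free: "theta_free m C" unfolding C_def
    using theta_free_exchange OR_low_rankD(2)[OF m_pos related_in_OR(1)[OF rel] assms(4)]
      \<open>w \<in> {1..2*m}\<close> .
  have "(pmul (Some |` C) \<sigma>, pmul (Some |` C) \<tau>) \<in> \<rho>" using mult_left[OF rel pid_in_OR[OF free]] .
  then have rel': "(\<sigma> |` C, \<tau> |` C) \<in> \<rho>" by (simp add: pmul_restrict_left)
  have "\<sigma> |` C \<subseteq>\<^sub>m \<tau> |` C" using \<open>\<sigma> \<subseteq>\<^sub>m \<tau>\<close> by (auto simp: map_le_def)
  moreover have "dom (\<tau> |` C) = C"
    using map_le_implies_dom_le[OF \<open>\<sigma> \<subseteq>\<^sub>m \<tau>\<close>] \<open>w \<in> dom \<tau>\<close> by (auto simp: C_def)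
  moreover have "w \<notin> dom (\<sigma> |` C)" using \<open>w \<notin> dom \<sigma>\<close> by simp
  moreover have "rk (\<tau> |` C) \<le> m" using calculation(2) card_theta_free_le[OF free] by (simp add: rk_def)
  ultimately have "collapsed C"
    using collapsed_of_proper_extension[OF rel'] by (metis C_def insertI1)
  moreover have "rk \<sigma> - 1 \<le> card C"
  proof -
    have "rk \<sigma> - 1 \<le> card (dom \<sigma> - {theta m w})"
      using diff_card_le_card_Diff[of "{theta m w}" "dom \<sigma>"] by (simp add: rk_def)
    also have "\<dots> \<le> card C" using theta_free_finite[OF free] by (simp add: C_def card_mono subset_insertI)
    finally show ?thesis .
  qed
  ultimately show ?thesis using that free by blast
qed

lemma exists_collapsed_of_full_rank:
  assumes rel: "(\<sigma>, \<tau>) \<in> \<rho>" and "\<sigma> \<noteq> \<tau>" "rk \<sigma> = 2*m"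
  obtains B where "theta_free m B" "card B = m" "collapsed B"
proof -
  have "\<sigma> \<in> Wprime m" using related_in_OR(1)[OF rel] assms(3) m_pos by (auto simp: OR_def)
  then have dom: "dom \<sigma> = {1..2*m}" and ran: "ran \<sigma> = {1..2*m}" and inj: "inj_on \<sigma> (dom \<sigma>)"
    by (auto simp: Wprime_def Wgrp_def pinj_def)
  have \<tau>: "dom \<tau> \<subseteq> {1..2*m}" "ran \<tau> \<subseteq> {1..2*m}"
    using related_in_OR(2)[OF rel] by (auto simp: OR_def pinj_def)
  obtain x where x: "\<tau> x \<noteq> \<sigma> x" using \<open>\<sigma> \<noteq> \<tau>\<close> by (metis ext)
  have "x \<in> {1..2*m}"
  proof (rule ccontr)
    assume "x \<notin> {1..2*m}"
    then have "\<sigma> x = None" "\<tau> x = None" using dom \<tau>(1) by auto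
    then show False using x by simp
  qed
  \<comment> \<open>y is the sigma-preimage of tau x, if there is one\<close>
  obtain y where y: "y \<in> {1..2*m}" "y \<noteq> x" "\<forall>z\<in>{1..2*m}. z \<noteq> y \<longrightarrow> \<tau> x \<noteq> \<sigma> z"
  proof (cases "\<tau> x")
    case None
    show ?thesis
    proof (rule that[of "theta m x"])
      show "theta m x \<in> {1..2*m}" using theta_mem[OF \<open>x \<in> {1..2*m}\<close>] .
      show "theta m x \<noteq> x" by (rule theta_neq_self)
      show "\<forall>z\<in>{1..2*m}. z \<noteq> theta m x \<longrightarrow> \<tau> x \<noteq> \<sigma> z"
        using None dom by (metis domIff)
    qed
  next
    case (Some v)
    then have "v \<in> ran \<sigma>" using \<tau>(2) ran by (auto intro: ranI)
    then obtain y where y: "\<sigma> y = Some v" by (auto simp: ran_def)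
    show ?thesis
    proof (rule that[of y])
      show "y \<in> {1..2*m}" using y dom by auto
      show "y \<noteq> x" using y Some x by auto
      show "\<forall>z\<in>{1..2*m}. z \<noteq> y \<longrightarrow> \<tau> x \<noteq> \<sigma> z"
        using y Some inj by (metis domI inj_onD)
    qed
  qed
  obtain B where B: "theta_free m B" "card B = m" "x \<in> B" "y \<notin> B"
    using theta_free_separate[OF \<open>x \<in> {1..2*m}\<close> y(1) y(2)[symmetric]] .
  then have "B \<subseteq> dom \<sigma>" using dom by (simp add: theta_free_def)
  moreover have "\<forall>z\<in>B. \<tau> x \<noteq> \<sigma> z" using y(3) B(4) \<open>B \<subseteq> dom \<sigma>\<close> dom by (metis subsetD)
  ultimately have "collapsed B" using collapsed_of_unmatched[OF rel B(1) _ B(3)] by blast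
  then show ?thesis using that B by blast
qed

lemma Im_subset_class_zero:
  assumes "collapsed B" "theta_free m B" "card B = m"
  shows "Im_I m \<subseteq> \<rho> `` {Map.empty} \<or> Im_II m \<subseteq> \<rho> `` {Map.empty}"
proof -
  have "\<pi> \<in> \<rho> `` {Map.empty}"
    if "\<pi> \<in> OR m" "rk \<pi> < m \<or> rk \<pi> = m \<and> (typeI m (dom \<pi>) \<longleftrightarrow> typeI m B)" for \<pi>
    using that by (intro class_zero_of_collapsed[OF assms(1,2)]) (auto simp: assms(3))
  then show ?thesis by (cases "typeI m B") (auto simp: Im_I_def Im_II_def)
qed

lemma Ik_subset_class_zero:
  assumes "collapsed C" "theta_free m C" "j \<le> card C" "j < m"
  shows "Ik m j \<subseteq> \<rho> `` {Map.empty}"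
proof
  fix \<pi> assume "\<pi> \<in> Ik m j"
  then show "\<pi> \<in> \<rho> `` {Map.empty}"
    using assms(3,4) by (intro class_zero_of_collapsed[OF assms(1,2)]) (auto simp: Ik_def)
qed

end

theorem lemma4p8:
  fixes m k :: nat and \<rho> :: "((nat \<Rightarrow> nat option) \<times> (nat \<Rightarrow> nat option)) set"
    and \<sigma> :: "nat \<Rightarrow> nat option"
  assumes "m \<ge> 1"
    and "congruence_OR m \<rho>"
    and "\<sigma> \<in> OR m" and "rk \<sigma> = k"
    and "\<exists>\<tau>\<in>OR m. \<tau> \<noteq> \<sigma> \<and> (\<tau>, \<sigma>) \<in> \<rho>"
  shows "(k = 2*m \<longrightarrow> (Im_I m \<subseteq> \<rho> `` {Map.empty} \<or> Im_II m \<subseteq> \<rho> `` {Map.empty}))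
       \<and> (k \<le> m \<longrightarrow> (k = 0 \<or> Ik m (k - 1) \<subseteq> \<rho> `` {Map.empty}))"
proof -
  interpret OR_congruence m \<rho> using assms(1,2) by unfold_locales
  obtain \<tau> where rel: "(\<sigma>, \<tau>) \<in> \<rho>" and "\<sigma> \<noteq> \<tau>" using assms(5) rel_sym by blast
  have "Im_I m \<subseteq> \<rho> `` {Map.empty} \<or> Im_II m \<subseteq> \<rho> `` {Map.empty}" if full: "rk \<sigma> = 2*m"
  proof -
    obtain B where "collapsed B" "theta_free m B" "card B = m"
      using exists_collapsed_of_full_rank[OF rel \<open>\<sigma> \<noteq> \<tau>\<close> full] by metis
    then show ?thesis by (rule Im_subset_class_zero)
  qed
  moreover have "Ik m (rk \<sigma> - 1) \<subseteq> \<rho> `` {Map.empty}" if low: "1 \<le> rk \<sigma>" "rk \<sigma> \<le> m"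
  proof -
    obtain C where "collapsed C" "theta_free m C" "rk \<sigma> - 1 \<le> card C"
      using exists_collapsed_of_low_rank[OF rel \<open>\<sigma> \<noteq> \<tau>\<close> low] by metis
    then show ?thesis using low by (intro Ik_subset_class_zero) auto
  qed
  ultimately show ?thesis using assms(4) by auto
qed

end
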